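(* Let $p>1$ and let $\varphi:\mathbb{R}^n\to\mathbb{R}\cup\{+\infty\}$ be proper and lower semicontinuous. Suppose $\bar x=0$ is a $p$-calm point of $\varphi$ with constant $M>0$ and $\varphi(0)=0$. Then for any $\gamma\in\big(0,\frac{2^{1-p}}{Mp}\big)$ and any $\varepsilon>0$ there is a neighborhood $U$ of $0$ such that $\operatorname{prox}^p_{\gamma\varphi}(x)\neq\emptyset$ for all $x\in U$, and if $y\in\operatorname{prox}^p_{\gamma\varphi}(x)$ with $x\in U$, then $\|y\|<\varepsilon$, $\varphi(y)<\varepsilon$, and $\frac1\gamma\|x-y\|^{p-1}<\varepsilon$.
   Context: $\operatorname{prox}^p_{\gamma\varphi}(x):=\operatorname{argmin}_{y}\big(\varphi(y)+\frac{1}{p\gamma}\|x-y\|^p\big)$. A point $\bar x\in\operatorname{dom}\varphi$ is a $p$-calm point of $\varphi$ with constant $M>0$ if $\varphi(x)+M\|x-\bar x\|^p>\varphi(\bar x)$ for all $x\neq\bar x$. *)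

theory Defs
  imports "HOL-Analysis.Analysis"
begin

text \<open>Extended-real-valued functions phi : R^n -> R \<union> {+inf}; R^n is rendered as an
  arbitrary Euclidean space 'a.\<close>

definition proper_fun :: "('a \<Rightarrow> ereal) \<Rightarrow> bool" where
  "proper_fun \<phi> \<longleftrightarrow> (\<forall>x. \<phi> x \<noteq> -\<infinity>) \<and> (\<exists>x. \<phi> x < \<infinity>)"

definition lsc :: "('a::topological_space \<Rightarrow> ereal) \<Rightarrow> bool" where
  "lsc \<phi> \<longleftrightarrow> (\<forall>x. \<phi> x \<le> Liminf (at x) \<phi>)"

definition prox :: "real \<Rightarrow> real \<Rightarrow> ('a::real_normed_vector \<Rightarrow> ereal) \<Rightarrow> 'a \<Rightarrow> 'a set" where
  "prox p \<gamma> \<phi> x =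
     {y. \<forall>z. \<phi> y + ereal ((1 / (p * \<gamma>)) * norm (x - y) powr p)
              \<le> \<phi> z + ereal ((1 / (p * \<gamma>)) * norm (x - z) powr p)}"

definition p_calm :: "real \<Rightarrow> ('a::real_normed_vector \<Rightarrow> ereal) \<Rightarrow> 'a \<Rightarrow> real \<Rightarrow> bool" where
  "p_calm p \<phi> xb M \<longleftrightarrow> M > 0 \<and> \<phi> xb < \<infinity> \<and>
     (\<forall>x. x \<noteq> xb \<longrightarrow> \<phi> x + ereal (M * norm (x - xb) powr p) > \<phi> xb)"

end

(*
  Calmness at 0 combined with (a + b)^p \<le> 2^(p-1) (a^p + b^p) gives the lower bound
  \<phi> y \<ge> -M 2^(p-1) (|x - y|^p + |x|^p).  The step-size condition says exactly that
  M 2^(p-1) < 1/(p \<gamma>), so the prox objective \<phi> y + |x - y|^p/(p \<gamma>) is coercive and,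
  being lower semicontinuous, attains its minimum.  Comparing a minimiser y with the
  competitor 0 yields |x - y| \<le> K |x| for a constant K and \<phi> y \<le> |x|^p/(p \<gamma>), and both bounds
  vanish as x \<rightarrow> 0.
*)
theory Submission
  imports Defs
begin

lemma powr_add_le_two_powr:
  fixes a b p :: real
  assumes "p \<ge> 1" "a \<ge> 0" "b \<ge> 0"
  shows "(a + b) powr p \<le> 2 powr (p - 1) * (a powr p + b powr p)"
proof (cases "a = 0 \<or> b = 0")
  case True
  have "1 \<le> 2 powr (p - 1)"
    using assms(1) by (intro ge_one_powr_ge_zero) auto
  then show ?thesis
    using True assms by (auto simp: mult_le_cancel_right1)
next
  case False
  with assms have "a > 0" "b > 0" by auto
  then have "((1 - 1/2) *\<^sub>R a + (1/2) *\<^sub>R b) powr p \<le> (1 - 1/2) * a powr p + (1/2) * b powr p"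
    by (intro convex_onD[OF powr_convex[OF assms(1)]]) auto
  then have midpoint: "((a + b) / 2) powr p \<le> (a powr p + b powr p) / 2"
    by (simp add: field_simps)
  have "(a + b) powr p = 2 powr p * ((a + b) / 2) powr p"
    using \<open>a > 0\<close> \<open>b > 0\<close> by (simp add: powr_divide)
  also have "\<dots> \<le> 2 powr p * ((a powr p + b powr p) / 2)"
    using midpoint by (rule mult_left_mono) simp
  also have "\<dots> = 2 powr (p - 1) * (a powr p + b powr p)"
    by (simp add: powr_diff)
  finally show ?thesis .
qed

lemma lsc_imp_open_superlevel:
  fixes \<phi> :: "'a::topological_space \<Rightarrow> ereal"
  assumes "lsc \<phi>"
  shows "open {y. t < \<phi> y}"
proof (rule Topological_Spaces.openI)
  fix x assume "x \<in> {y. t < \<phi> y}"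
  then have "t < \<phi> x" by simp
  then have "t < Liminf (at x) \<phi>"
    using assms unfolding lsc_def by (meson less_le_trans)
  then have "eventually (\<lambda>y. t < \<phi> y) (at x)"
    using le_Liminf_iff[of "Liminf (at x) \<phi>" "at x" \<phi>] by auto
  then have "eventually (\<lambda>y. t < \<phi> y) (nhds x)"
    using \<open>t < \<phi> x\<close> by (auto simp: eventually_at_filter elim: eventually_mono)
  then show "\<exists>T. open T \<and> x \<in> T \<and> T \<subseteq> {y. t < \<phi> y}"
    by (auto simp: eventually_nhds)
qed

lemma open_superlevel_add_continuous:
  fixes \<phi> :: "'a::topological_space \<Rightarrow> ereal"
  assumes "\<And>s::real. open {y. ereal s < \<phi> y}" "continuous_on UNIV h"
  shows "open {y. ereal t < \<phi> y + ereal (h y)}"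
proof -
  have "{y. ereal t < \<phi> y + ereal (h y)} = (\<Union>s. {y. ereal s < \<phi> y} \<inter> {y. t - s < h y})"
  proof (intro equalityI subsetI)
    fix y assume "y \<in> {y. ereal t < \<phi> y + ereal (h y)}"
    then have lt: "ereal t < \<phi> y + ereal (h y)" by simp
    show "y \<in> (\<Union>s. {y. ereal s < \<phi> y} \<inter> {y. t - s < h y})"
    proof (cases "\<phi> y")
      case (real r)
      then show ?thesis
        using lt by (auto intro!: exI[of _ "(r + t - h y) / 2"] simp: field_simps)
    next
      case PInf
      then show ?thesis by (auto intro!: exI[of _ "t - h y + 1"])
    next
      case MInf
      then show ?thesis using lt by simp
    qed
  next
    fix y assume "y \<in> (\<Union>s. {y. ereal s < \<phi> y} \<inter> {y. t - s < h y})"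
    then show "y \<in> {y. ereal t < \<phi> y + ereal (h y)}"
      by (cases "\<phi> y") auto
  qed
  moreover have "open {y. t - s < h y}" for s
    using assms(2) by (intro open_Collect_less continuous_intros)
  ultimately show ?thesis
    using assms(1) by (auto intro!: open_Int)
qed

lemma open_superlevel_ereal:
  fixes f :: "'a::topological_space \<Rightarrow> ereal"
  assumes "\<And>s::real. open {y. ereal s < f y}" "c \<noteq> -\<infinity>"
  shows "open {y. c < f y}"
  using assms by (cases c) auto

lemma compact_attains_min_open_superlevel:
  fixes f :: "'a::topological_space \<Rightarrow> ereal"
  assumes "\<And>s::real. open {y. ereal s < f y}" "compact K" "K \<noteq> {}"
  shows "\<exists>z\<in>K. \<forall>y\<in>K. f z \<le> f y"
proof (rule ccontr)
  assume "\<not> ?thesis"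
  then have smaller: "\<exists>y\<in>K. f y < f z" if "z \<in> K" for z
    using that by (meson not_le)
  have "open {y. f z < f y}" if "z \<in> K" for z
  proof (rule open_superlevel_ereal[OF assms(1)])
    from smaller[OF that] obtain y where "f y < f z" by blast
    then show "f z \<noteq> -\<infinity>" by auto
  qed
  moreover have "K \<subseteq> (\<Union>z\<in>K. {y. f z < f y})"
    using smaller by blast
  ultimately obtain F where F: "F \<subseteq> K" "finite F" "K \<subseteq> (\<Union>z\<in>F. {y. f z < f y})"
    by (rule compactE_image[OF assms(2)])
  with assms(3) have "F \<noteq> {}" by auto
  define z0 where "z0 = arg_min_on f F"
  have "z0 \<in> F" "\<not> (\<exists>z\<in>F. f z < f z0)"
    unfolding z0_def by (rule arg_min_if_finite[OF \<open>finite F\<close> \<open>F \<noteq> {}\<close>])+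
  then show False
    using F by blast
qed

lemma attains_min_bounded_sublevel:
  fixes f :: "'a::heine_borel \<Rightarrow> ereal"
  assumes "\<And>s::real. open {y. ereal s < f y}" "bounded {y. f y \<le> f a}"
  shows "\<exists>z. \<forall>y. f z \<le> f y"
proof (cases "f a = -\<infinity>")
  case True
  then show ?thesis by (intro exI[of _ a]) simp
next
  case False
  let ?K = "{y. f y \<le> f a}"
  have "- ?K = {y. f a < f y}"
    by (simp add: set_eq_iff not_le)
  then have "closed ?K"
    using open_superlevel_ereal[OF assms(1) False] by (simp add: closed_def)
  then have "compact ?K"
    using assms(2) by (simp add: compact_eq_bounded_closed)
  moreover have "?K \<noteq> {}" by blast
  ultimately obtain z where z: "z \<in> ?K" "\<forall>y\<in>?K. f z \<le> f y"
    using compact_attains_min_open_superlevel[OF assms(1)] by blast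
  have "f z \<le> f y" for y
  proof (cases "f y \<le> f a")
    case True
    then show ?thesis using z(2) by simp
  next
    case False
    then show ?thesis using z(1) by simp
  qed
  then show ?thesis by blast
qed

lemma p_calm_le:
  assumes "p_calm p \<phi> xb M"
  shows "\<phi> xb \<le> \<phi> y + ereal (M * norm (y - xb) powr p)"
  using assms by (cases "y = xb") (auto simp: p_calm_def less_imp_le)

lemma p_calm_zero_lower_bound:
  fixes \<phi> :: "'a::real_normed_vector \<Rightarrow> ereal"
  assumes "p \<ge> 1" "p_calm p \<phi> 0 M" "\<phi> 0 = 0"
  shows "ereal (- M * 2 powr (p - 1) * (norm (x - y) powr p + norm x powr p)) \<le> \<phi> y"
proof -
  have "M > 0"
    using assms(2) by (simp add: p_calm_def)
  have "norm y \<le> norm (x - y) + norm x"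
    using norm_triangle_ineq4[of x "x - y"] by simp
  then have "norm y powr p \<le> (norm (x - y) + norm x) powr p"
    using assms(1) by (intro powr_mono2) auto
  also have "\<dots> \<le> 2 powr (p - 1) * (norm (x - y) powr p + norm x powr p)"
    using assms(1) by (intro powr_add_le_two_powr) auto
  finally have "M * norm y powr p \<le> M * 2 powr (p - 1) * (norm (x - y) powr p + norm x powr p)"
    using \<open>M > 0\<close> by (simp add: mult.assoc)
  moreover have "0 \<le> \<phi> y + ereal (M * norm y powr p)"
    using p_calm_le[OF assms(2), of y] assms(3) by simp
  ultimately show ?thesis
    by (cases "\<phi> y") auto
qed

lemma p_calm_zero_sublevel_bounds:
  fixes \<phi> :: "'a::real_normed_vector \<Rightarrow> ereal"
  assumes "p \<ge> 1" "p_calm p \<phi> 0 M" "\<phi> 0 = 0" "M * 2 powr (p - 1) < c"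
    and "\<phi> y + ereal (c * norm (x - y) powr p) \<le> ereal (c * norm x powr p)"
  shows "norm (x - y) \<le> ((c + M * 2 powr (p - 1)) / (c - M * 2 powr (p - 1))) powr (1 / p) * norm x"
    and "\<phi> y \<le> ereal (c * norm x powr p)"
proof -
  define M' where "M' = M * 2 powr (p - 1)"
  have "M > 0"
    using assms(2) by (simp add: p_calm_def)
  then have "0 < M'" "M' < c"
    using assms(4) by (simp_all add: M'_def)
  have "ereal (- M' * (norm (x - y) powr p + norm x powr p)) \<le> \<phi> y"
    using p_calm_zero_lower_bound[OF assms(1-3)] by (simp add: M'_def)
  from order.trans[OF add_right_mono[OF this] assms(5)]
  have "(c - M') * norm (x - y) powr p \<le> (c + M') * norm x powr p"
    by (simp add: algebra_simps)
  then have "norm (x - y) powr p \<le> (c + M') / (c - M') * norm x powr p"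
    using \<open>M' < c\<close> by (simp add: field_simps)
  then have "(norm (x - y) powr p) powr (1 / p) \<le> ((c + M') / (c - M') * norm x powr p) powr (1 / p)"
    using assms(1) by (intro powr_mono2) auto
  also have "\<dots> = ((c + M') / (c - M')) powr (1 / p) * (norm x powr p) powr (1 / p)"
    by (rule powr_mult)
  finally have "norm (x - y) \<le> ((c + M') / (c - M')) powr (1 / p) * norm x"
    using assms(1) by (simp add: powr_powr)
  then show "norm (x - y) \<le> ((c + M * 2 powr (p - 1)) / (c - M * 2 powr (p - 1))) powr (1 / p) * norm x"
    by (simp only: M'_def)
  have "\<phi> y \<le> \<phi> y + ereal (c * norm (x - y) powr p)"
    using \<open>0 < M'\<close> \<open>M' < c\<close> by (cases "\<phi> y") auto
  then show "\<phi> y \<le> ereal (c * norm x powr p)"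
    using assms(5) by (rule order.trans)
qed

lemma prox_nonempty:
  fixes \<phi> :: "'a::{real_normed_vector, heine_borel} \<Rightarrow> ereal"
  assumes "p \<ge> 1" "lsc \<phi>" "p_calm p \<phi> 0 M" "\<phi> 0 = 0" "M * 2 powr (p - 1) < 1 / (p * \<gamma>)"
  shows "prox p \<gamma> \<phi> x \<noteq> {}"
proof -
  define c where "c = 1 / (p * \<gamma>)"
  define g where "g y = \<phi> y + ereal (c * norm (x - y) powr p)" for y
  have "continuous_on UNIV (\<lambda>y. c * norm (x - y) powr p)"
    using assms(1) by (intro continuous_intros continuous_on_powr') auto
  then have open_g: "open {y. ereal s < g y}" for s
    unfolding g_def by (intro open_superlevel_add_continuous lsc_imp_open_superlevel[OF assms(2)])
  have "g 0 = ereal (c * norm x powr p)"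
    by (simp add: g_def assms(4))
  then have "{y. g y \<le> g 0} \<subseteq>
      cball x (((c + M * 2 powr (p - 1)) / (c - M * 2 powr (p - 1))) powr (1 / p) * norm x)"
    using p_calm_zero_sublevel_bounds(1)[OF assms(1,3,4)] assms(5)
    by (auto simp: g_def c_def dist_norm)
  then have "bounded {y. g y \<le> g 0}"
    by (rule bounded_subset[OF bounded_cball])
  then obtain z where "\<forall>y. g z \<le> g y"
    using attains_min_bounded_sublevel[OF open_g] by blast
  then have "z \<in> prox p \<gamma> \<phi> x"
    by (simp add: prox_def g_def c_def)
  then show ?thesis by blast
qed

lemma eventually_prox_small:
  fixes \<phi> :: "'a::real_normed_vector \<Rightarrow> ereal"
  assumes "p > 1" "p_calm p \<phi> 0 M" "\<phi> 0 = 0" "\<gamma> > 0" "M * 2 powr (p - 1) < 1 / (p * \<gamma>)"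
    and "\<epsilon> > 0"
  shows "\<forall>\<^sub>F x in nhds 0. \<forall>y\<in>prox p \<gamma> \<phi> x.
           norm y < \<epsilon> \<and> \<phi> y < ereal \<epsilon> \<and> (1 / \<gamma>) * norm (x - y) powr (p - 1) < \<epsilon>"
proof -
  define c where "c = 1 / (p * \<gamma>)"
  define K where "K = ((c + M * 2 powr (p - 1)) / (c - M * 2 powr (p - 1))) powr (1 / p)"
  have bounds: "norm (x - y) \<le> K * norm x" "\<phi> y \<le> ereal (c * norm x powr p)"
    if "y \<in> prox p \<gamma> \<phi> x" for x y
  proof -
    have "M * 2 powr (p - 1) < c"
      using assms(5) by (simp add: c_def)
    moreover have "\<phi> y + ereal (c * norm (x - y) powr p) \<le> ereal (c * norm x powr p)"
      using that assms(3) by (auto simp: prox_def c_def dest: spec[of _ 0])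
    ultimately show "norm (x - y) \<le> K * norm x" "\<phi> y \<le> ereal (c * norm x powr p)"
      using p_calm_zero_sublevel_bounds[OF _ assms(2,3)] assms(1) unfolding K_def by auto
  qed
  have "K \<ge> 0"
    by (simp add: K_def)
  have norm_0: "((\<lambda>x::'a. norm x) \<longlongrightarrow> 0) (nhds 0)"
    by (intro tendsto_norm_zero filterlim_ident)
  have "((\<lambda>x::'a. (K + 1) * norm x) \<longlongrightarrow> 0) (nhds 0)"
    using tendsto_mult_right_zero[OF norm_0] by simp
  moreover have "((\<lambda>x::'a. c * norm x powr p) \<longlongrightarrow> 0) (nhds 0)"
    using assms(1) by (intro tendsto_mult_right_zero tendsto_zero_powrI norm_0 tendsto_const) auto
  moreover have "((\<lambda>x::'a. (1 / \<gamma>) * (K * norm x) powr (p - 1)) \<longlongrightarrow> 0) (nhds 0)"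
    using assms(1) \<open>K \<ge> 0\<close>
    by (intro tendsto_mult_right_zero tendsto_zero_powrI norm_0 tendsto_const) auto
  ultimately have "\<forall>\<^sub>F x in nhds (0::'a). (K + 1) * norm x < \<epsilon> \<and> c * norm x powr p < \<epsilon> \<and>
      (1 / \<gamma>) * (K * norm x) powr (p - 1) < \<epsilon>"
    using assms(6) by (intro eventually_conj order_tendstoD(2)) auto
  then show ?thesis
  proof (rule eventually_mono, intro ballI conjI)
    fix x y
    assume small: "(K + 1) * norm x < \<epsilon> \<and> c * norm x powr p < \<epsilon> \<and>
      (1 / \<gamma>) * (K * norm x) powr (p - 1) < \<epsilon>" and y: "y \<in> prox p \<gamma> \<phi> x"
    have "norm y \<le> norm (x - y) + norm x"
      using norm_triangle_ineq4[of x "x - y"] by simp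
    then show "norm y < \<epsilon>"
      using bounds(1)[OF y] small by (simp add: algebra_simps)
    show "\<phi> y < ereal \<epsilon>"
      using bounds(2)[OF y] small by (simp add: le_less_trans)
    have "norm (x - y) powr (p - 1) \<le> (K * norm x) powr (p - 1)"
      using bounds(1)[OF y] assms(1) by (intro powr_mono2) auto
    then have "(1 / \<gamma>) * norm (x - y) powr (p - 1) \<le> (1 / \<gamma>) * (K * norm x) powr (p - 1)"
      using assms(4) by (intro mult_left_mono) auto
    then show "(1 / \<gamma>) * norm (x - y) powr (p - 1) < \<epsilon>"
      using small by linarith
  qed
qed

theorem lemma4:
  fixes \<phi> :: "'a::euclidean_space \<Rightarrow> ereal" and p M \<gamma> \<epsilon> :: real
  assumes "p > 1"
    and "proper_fun \<phi>" and "lsc \<phi>"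
    and "M > 0" and "p_calm p \<phi> 0 M" and "\<phi> 0 = 0"
    and "0 < \<gamma>" and "\<gamma> < 2 powr (1 - p) / (M * p)"
    and "\<epsilon> > 0"
  shows "\<exists>U. open U \<and> 0 \<in> U \<and>
           (\<forall>x\<in>U. prox p \<gamma> \<phi> x \<noteq> {}) \<and>
           (\<forall>x\<in>U. \<forall>y\<in>prox p \<gamma> \<phi> x.
              norm y < \<epsilon> \<and> \<phi> y < ereal \<epsilon> \<and> (1 / \<gamma>) * norm (x - y) powr (p - 1) < \<epsilon>)"
proof -
  have "\<gamma> * (M * p) < 2 powr (1 - p)"
    using assms(1,4,8) by (simp add: pos_less_divide_eq)
  then have "\<gamma> * (M * p) * 2 powr (p - 1) < 2 powr (1 - p) * 2 powr (p - 1)"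
    by (rule mult_strict_right_mono) simp
  also have "\<dots> = 1"
    by (simp add: powr_add[symmetric])
  finally have step_size: "M * 2 powr (p - 1) < 1 / (p * \<gamma>)"
    using assms(1,7) by (simp add: field_simps mult_ac)
  obtain U where "open U" "0 \<in> U" "\<forall>x\<in>U. \<forall>y\<in>prox p \<gamma> \<phi> x.
      norm y < \<epsilon> \<and> \<phi> y < ereal \<epsilon> \<and> (1 / \<gamma>) * norm (x - y) powr (p - 1) < \<epsilon>"
    using eventually_prox_small[OF assms(1,5,6,7) step_size assms(9)] unfolding eventually_nhds by blast
  moreover have "prox p \<gamma> \<phi> x \<noteq> {}" for x
    using prox_nonempty[OF _ assms(3,5,6) step_size] assms(1) by simp
  ultimately show ?thesis by blast
qed

end
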